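(* Let $n\ge k\ge 1$ be integers, $i\in\{1,\ldots,n\}$, and let $H\sim\text{Hyp}(n,i,k)$ be such that $\mathbb{E}(H)\le 1$. Then $\mathbb{P}(H=1) \ge \mathbb{P}(H\ge 2)$.
   Context: $\text{Hyp}(n,i,k)$ denotes the hypergeometric distribution: the number of black marbles in a sample without replacement of size $k$ from an urn with $i$ black and $n-i$ white marbles, i.e. $\mathbb{P}(H=j)=\binom{i}{j}\binom{n-i}{k-j}/\binom{n}{k}$. One has $\mathbb{E}(H)=ik/n$. *)

theory Defs
  imports Complex_Main
begin

text \<open>Hypergeometric distribution Hyp(n,i,k): number of black marbles in a sample of
size k drawn without replacement from an urn with i black and n-i white marbles.\<close>

definition hyp_pmf :: "nat \<Rightarrow> nat \<Rightarrow> nat \<Rightarrow> nat \<Rightarrow> real" where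
  "hyp_pmf n i k j = real (i choose j) * real ((n - i) choose (k - j)) / real (n choose k)"

text \<open>P(H = j) is zero for j > k; P(H >= 2) is the sum over j = 2..k.\<close>
definition hyp_prob_ge :: "nat \<Rightarrow> nat \<Rightarrow> nat \<Rightarrow> nat \<Rightarrow> real" where
  "hyp_prob_ge n i k m = (\<Sum>j\<in>{m..k}. hyp_pmf n i k j)"

definition hyp_mean :: "nat \<Rightarrow> nat \<Rightarrow> nat \<Rightarrow> real" where
  "hyp_mean n i k = (\<Sum>j\<in>{0..k}. real j * hyp_pmf n i k j)"

end

theory Submission
  imports Defs
begin

text \<open>Since \<open>\<bbbE>(H) = ik/n\<close>, the hypothesis says \<open>ik \<le> n\<close>. The successive ratios of the
  hypergeometric weights are
  \<open>P(H = j+1) / P(H = j) = (i - j)(k - j) / ((j + 1)(n - i - k + j + 1))\<close>,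
  and for \<open>j \<ge> 1\<close> the numerator is at most \<open>(i - 1)(k - 1) \<le> n - i - k + 1\<close>, so every ratio
  is at most \<open>1/2\<close>. Hence the tail \<open>P(H \<ge> 2)\<close> is dominated by a geometric series with
  leading term \<open>P(H = 1)/2\<close>.\<close>

lemma sum_le_of_halving:
  fixes f :: "nat \<Rightarrow> 'a::linordered_idom"
  assumes halving: "\<And>j. m \<le> j \<Longrightarrow> j < t \<Longrightarrow> 2 * f (Suc j) \<le> f j" and "m \<le> t"
  shows "(\<Sum>j\<in>{Suc m..t}. f j) + f t \<le> f m"
  using \<open>m \<le> t\<close> halving
proof (induction t rule: dec_induct)
  case base
  then show ?case by simp
next
  case (step t)
  then have "2 * f (Suc t) \<le> f t" and "(\<Sum>j\<in>{Suc m..t}. f j) + f t \<le> f m"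
    by simp_all
  moreover have "{Suc m..Suc t} = insert (Suc t) {Suc m..t}"
    using step.hyps by auto
  ultimately show ?case by simp
qed

lemma hyp_pmf_nonneg: "hyp_pmf n i k j \<ge> 0"
  unfolding hyp_pmf_def by simp

lemma hyp_pmf_eq_0: "i < j \<Longrightarrow> hyp_pmf n i k j = 0"
  unfolding hyp_pmf_def by simp

lemma sum_mult_choose_vandermonde:
  assumes "1 \<le> k" and "i \<le> n"
  shows "(\<Sum>j\<le>k. j * ((i choose j) * ((n - i) choose (k - j)))) = i * ((n - 1) choose (k - 1))"
proof (cases i)
  case 0
  then show ?thesis by (auto intro!: sum.neutral)
next
  case (Suc i')
  obtain k' where k: "k = Suc k'"
    using \<open>1 \<le> k\<close> by (cases k) auto
  have "(\<Sum>j\<le>k. j * ((i choose j) * ((n - i) choose (k - j))))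
      = (\<Sum>l\<le>k'. Suc l * ((i choose Suc l) * ((n - i) choose (k' - l))))"
    unfolding k sum.atMost_Suc_shift by simp
  also have "\<dots> = (\<Sum>l\<le>k'. i * ((i' choose l) * ((n - i) choose (k' - l))))"
    unfolding mult.assoc [symmetric] binomial_absorption by (simp add: Suc)
  also have "\<dots> = i * ((i' + (n - i)) choose k')"
    unfolding sum_distrib_left [symmetric] vandermonde ..
  also have "i' + (n - i) = n - 1"
    using Suc \<open>i \<le> n\<close> by simp
  finally show ?thesis
    by (simp add: k)
qed

lemma hyp_mean_eq:
  assumes "k \<le> n" and "i \<le> n"
  shows "hyp_mean n i k = real i * real k / real n"
proof (cases "k = 0")
  case True
  then show ?thesis
    by (simp add: hyp_mean_def)
next
  case False
  have "hyp_mean n i k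
      = real (\<Sum>j\<le>k. j * ((i choose j) * ((n - i) choose (k - j)))) / real (n choose k)"
    unfolding hyp_mean_def hyp_pmf_def atLeast0AtMost
    by (simp add: sum_divide_distrib mult.assoc)
  also have "\<dots> = real (i * ((n - 1) choose (k - 1))) / real (n choose k)"
    using False assms by (simp add: sum_mult_choose_vandermonde)
  also have "\<dots> = real i * real k / real n"
  proof -
    have "k * (n choose k) = n * ((n - 1) choose (k - 1))"
      using False by (simp add: times_binomial_minus1_eq)
    moreover have "n choose k > 0" and "n > 0"
      using False assms by simp_all
    ultimately show ?thesis
      by (simp add: field_simps flip: of_nat_mult)
  qed
  finally show ?thesis .
qed

lemma hyp_pmf_Suc_recurrence:
  assumes "j < k"
  shows "real (Suc j * (n - i - (k - Suc j))) * hyp_pmf n i k (Suc j)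
    = real ((i - j) * (k - j)) * hyp_pmf n i k j"
proof -
  define m where "m = n - i"
  have white: "(m - (k - Suc j)) * (m choose (k - Suc j)) = (k - j) * (m choose (k - j))"
    using binomial_absorb_comp[of m "k - Suc j"] binomial_absorption[of "k - Suc j" m] assms
    by (simp add: Suc_diff_Suc)
  have black: "Suc j * (i choose Suc j) = (i - j) * (i choose j)"
    by (metis binomial_absorb_comp binomial_absorption)
  have "Suc j * (m - (k - Suc j)) * ((i choose Suc j) * (m choose (k - Suc j)))
      = (i - j) * (k - j) * ((i choose j) * (m choose (k - j)))"
    by (metis black white mult.assoc mult.left_commute)
  then have "real (Suc j * (m - (k - Suc j))) * (real (i choose Suc j) * real (m choose (k - Suc j)))
      = real ((i - j) * (k - j)) * (real (i choose j) * real (m choose (k - j)))"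
    by (simp only: of_nat_mult [symmetric] mult.assoc)
  then show ?thesis
    unfolding hyp_pmf_def m_def by (simp add: mult.assoc)
qed

lemma hyp_pmf_halving:
  assumes "i * k \<le> n" and "1 \<le> j" and "j < k"
  shows "2 * hyp_pmf n i k (Suc j) \<le> hyp_pmf n i k j"
proof (cases "j < i")
  case False
  then show ?thesis
    by (simp add: hyp_pmf_eq_0 hyp_pmf_nonneg)
next
  case True
  define c where "c = (i - j) * (k - j)"
  have "(i - j) * (k - j) \<le> (i - 1) * (k - 1)"
    using \<open>1 \<le> j\<close> by (intro mult_le_mono) auto
  also have "\<dots> \<le> n - i - (k - Suc j)"
    using assms True by (cases i; cases k) (auto simp: algebra_simps)
  finally have "2 * c \<le> Suc j * (n - i - (k - Suc j))"
    unfolding c_def using \<open>1 \<le> j\<close> by (intro mult_le_mono) auto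
  then have "real c * (2 * hyp_pmf n i k (Suc j))
      \<le> real (Suc j * (n - i - (k - Suc j))) * hyp_pmf n i k (Suc j)"
    by (simp add: hyp_pmf_nonneg mult_right_mono flip: mult.assoc of_nat_mult)
  also have "\<dots> = real c * hyp_pmf n i k j"
    unfolding c_def using \<open>j < k\<close> by (rule hyp_pmf_Suc_recurrence)
  finally show ?thesis
    using True \<open>j < k\<close> by (simp add: c_def)
qed

theorem lemma2:
  fixes n i k :: nat
  assumes "1 \<le> k" and "k \<le> n" and "1 \<le> i" and "i \<le> n"
    and "hyp_mean n i k \<le> 1"
  shows "hyp_pmf n i k 1 \<ge> hyp_prob_ge n i k 2"
proof -
  have "real i * real k / real n \<le> 1"
    using assms hyp_mean_eq by simp
  then have "i * k \<le> n"
    using assms by (simp add: divide_le_eq flip: of_nat_mult)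
  then have "(\<Sum>j\<in>{2..k}. hyp_pmf n i k j) + hyp_pmf n i k k \<le> hyp_pmf n i k 1"
    using sum_le_of_halving[of 1 k "hyp_pmf n i k"] hyp_pmf_halving \<open>1 \<le> k\<close>
    by (simp add: numeral_2_eq_2)
  then show ?thesis
    unfolding hyp_prob_ge_def using hyp_pmf_nonneg[of n i k k] by linarith
qed

end
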